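(* Let $\mathcal{I}=(R,U,C,\omega)$ be an instance of Valued APEP such that $C$ is $t$-wbounded. Then there exists an optimal solution $A^*$ of $\mathcal{I}$ with $|A^*|\le t$.
   Context: $U$ is a finite set of users, $R$ a finite set of resources. An authorization relation is $A\subseteq U\times R$; $A(r)=\{u:(u,r)\in A\}$, $A(u)=\{r:(u,r)\in A\}$; $A$ is complete if $A(r)\neq\emptyset$ for all $r\in R$. A weighted constraint $c$ is a function $w_c:2^{U\times R}\to\mathbb{N}$ with $w_c(A)=0$ iff $A$ satisfies $c$. A weighted user authorization function is $\omega:U\times 2^R\to\mathbb{N}$ with $\omega(u,T')\le\omega(u,T)$ whenever $T'\subseteq T$, and $\omega(u,T)=0$ if $u$ is authorized for every resource of $T$. Put $\Omega(A)=\sum_{u\in U}\omega(u,A(u))$, $w_C(A)=\sum_{c\in C}w_c(A)$ and $w(A)=\Omega(A)+w_C(A)$. An instance of Valued APEP is $(R,U,C,\omega)$ with $C$ a set of weighted constraints; an optimal solution is a complete authorization relation $A$ with $w(A)\le w(A')$ for every complete authorization relation $A'$. $C$ is $t$-wbounded if for every complete authorization relation $A$ with $|A|>t$ there is a complete authorization relation $A'\subseteq A$ with $|A'|<|A|$ and $w_C(A')\le w_C(A)$. *)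

theory Defs
  imports Main
begin

definition auth_res :: "('u \<times> 'r) set \<Rightarrow> 'u \<Rightarrow> 'r set" where
  "auth_res A u = {r. (u, r) \<in> A}"

definition auth_users :: "('u \<times> 'r) set \<Rightarrow> 'r \<Rightarrow> 'u set" where
  "auth_users A r = {u. (u, r) \<in> A}"

definition is_auth_rel :: "'u set \<Rightarrow> 'r set \<Rightarrow> ('u \<times> 'r) set \<Rightarrow> bool" where
  "is_auth_rel U R A \<longleftrightarrow> A \<subseteq> U \<times> R"

definition complete_auth :: "'u set \<Rightarrow> 'r set \<Rightarrow> ('u \<times> 'r) set \<Rightarrow> bool" where
  "complete_auth U R A \<longleftrightarrow> is_auth_rel U R A \<and> (\<forall>r\<in>R. auth_users A r \<noteq> {})"

definition weighted_user_auth ::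
  "('u \<times> 'r) set \<Rightarrow> 'u set \<Rightarrow> 'r set \<Rightarrow> ('u \<Rightarrow> 'r set \<Rightarrow> nat) \<Rightarrow> bool" where
  "weighted_user_auth Auth U R \<omega> \<longleftrightarrow>
     (\<forall>u\<in>U. \<forall>T T'. T' \<subseteq> T \<and> T \<subseteq> R \<longrightarrow> \<omega> u T' \<le> \<omega> u T) \<and>
     (\<forall>u\<in>U. \<forall>T. T \<subseteq> R \<and> (\<forall>r\<in>T. (u, r) \<in> Auth) \<longrightarrow> \<omega> u T = 0)"

definition Omega :: "'u set \<Rightarrow> ('u \<Rightarrow> 'r set \<Rightarrow> nat) \<Rightarrow> ('u \<times> 'r) set \<Rightarrow> nat" where
  "Omega U \<omega> A = (\<Sum>u\<in>U. \<omega> u (auth_res A u))"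

text \<open>A weighted constraint is its weight function; C is a (finite) set of them.\<close>
definition wC :: "((('u \<times> 'r) set) \<Rightarrow> nat) set \<Rightarrow> ('u \<times> 'r) set \<Rightarrow> nat" where
  "wC C A = (\<Sum>c\<in>C. c A)"

definition total_weight ::
  "'u set \<Rightarrow> ((('u \<times> 'r) set) \<Rightarrow> nat) set \<Rightarrow> ('u \<Rightarrow> 'r set \<Rightarrow> nat) \<Rightarrow> ('u \<times> 'r) set \<Rightarrow> nat" where
  "total_weight U C \<omega> A = Omega U \<omega> A + wC C A"

definition optimal_solution ::
  "'r set \<Rightarrow> 'u set \<Rightarrow> ((('u \<times> 'r) set) \<Rightarrow> nat) set \<Rightarrow> ('u \<Rightarrow> 'r set \<Rightarrow> nat) \<Rightarrow> ('u \<times> 'r) set \<Rightarrow> bool" where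
  "optimal_solution R U C \<omega> A \<longleftrightarrow> complete_auth U R A \<and>
     (\<forall>A'. complete_auth U R A' \<longrightarrow> total_weight U C \<omega> A \<le> total_weight U C \<omega> A')"

definition t_wbounded ::
  "nat \<Rightarrow> 'r set \<Rightarrow> 'u set \<Rightarrow> ((('u \<times> 'r) set) \<Rightarrow> nat) set \<Rightarrow> bool" where
  "t_wbounded t R U C \<longleftrightarrow>
     (\<forall>A. complete_auth U R A \<and> card A > t \<longrightarrow>
        (\<exists>A'. complete_auth U R A' \<and> A' \<subseteq> A \<and> card A' < card A \<and> wC C A' \<le> wC C A))"

end

theory Submission
  imports Defs
begin

text \<open>Among the optimal solutions, which exist because weights are natural numbers, pick one
  of least cardinality. Removing pairs never increases \<open>\<Omega>\<close>, since \<open>\<omega>\<close> is monotone, so if it had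
  more than \<open>t\<close> pairs, \<open>t\<close>-wboundedness would yield a smaller complete subrelation of no larger
  total weight, i.e. a smaller optimal solution.\<close>

lemma Omega_mono_subset:
  assumes "weighted_user_auth Auth U R \<omega>" and "A' \<subseteq> A" and "A \<subseteq> U \<times> R"
  shows "Omega U \<omega> A' \<le> Omega U \<omega> A"
  unfolding Omega_def
proof (rule sum_mono)
  fix u assume "u \<in> U"
  moreover have "auth_res A' u \<subseteq> auth_res A u" "auth_res A u \<subseteq> R"
    using assms(2,3) unfolding auth_res_def by auto
  ultimately show "\<omega> u (auth_res A' u) \<le> \<omega> u (auth_res A u)"
    using assms(1) unfolding weighted_user_auth_def by blast
qed

lemma optimal_solution_exists:
  assumes "complete_auth U R A"
  shows "\<exists>A. optimal_solution R U C \<omega> A"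
  using ex_has_least_nat[of "complete_auth U R" A "total_weight U C \<omega>"] assms
  unfolding optimal_solution_def by blast

lemma optimal_solution_subset:
  assumes "weighted_user_auth Auth U R \<omega>" and "optimal_solution R U C \<omega> A"
    and "complete_auth U R A'" and "A' \<subseteq> A" and "wC C A' \<le> wC C A"
  shows "optimal_solution R U C \<omega> A'"
proof -
  have "A \<subseteq> U \<times> R"
    using assms(2) unfolding optimal_solution_def complete_auth_def is_auth_rel_def by blast
  then have "Omega U \<omega> A' \<le> Omega U \<omega> A"
    using Omega_mono_subset[OF assms(1,4)] by blast
  then have "total_weight U C \<omega> A' \<le> total_weight U C \<omega> A"
    using assms(5) unfolding total_weight_def by simp
  then show ?thesis
    using assms(2,3) unfolding optimal_solution_def by (meson order_trans)
qed

theorem lemma4p4: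
  fixes R :: "'r set" and U :: "'u set" and C :: "((('u \<times> 'r) set) \<Rightarrow> nat) set"
    and \<omega> :: "'u \<Rightarrow> 'r set \<Rightarrow> nat" and Auth :: "('u \<times> 'r) set" and t :: nat
  assumes "finite U" and "finite R" and "finite C"
    and "weighted_user_auth Auth U R \<omega>"
    and "\<exists>A. complete_auth U R A"
    and "t_wbounded t R U C"
  shows "\<exists>A. optimal_solution R U C \<omega> A \<and> card A \<le> t"
proof -
  obtain A0 where "optimal_solution R U C \<omega> A0"
    using assms(5) optimal_solution_exists by blast
  then obtain A where opt: "optimal_solution R U C \<omega> A"
    and least: "\<And>B. optimal_solution R U C \<omega> B \<Longrightarrow> card A \<le> card B"
    using ex_has_least_nat[of "optimal_solution R U C \<omega>" A0 card] by blast
  have "card A \<le> t"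
  proof (rule ccontr)
    assume "\<not> card A \<le> t"
    moreover have "complete_auth U R A"
      using opt unfolding optimal_solution_def by blast
    ultimately obtain A' where A': "complete_auth U R A'" "A' \<subseteq> A"
      "card A' < card A" "wC C A' \<le> wC C A"
      using assms(6) unfolding t_wbounded_def by auto
    then have "optimal_solution R U C \<omega> A'"
      using optimal_solution_subset[OF assms(4) opt] by blast
    with least A'(3) show False by fastforce
  qed
  with opt show ?thesis by blast
qed

end
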